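(* Let $\lambda\in\mathbf{C}$ with $\lambda\neq1$ and let $r\in\mathbf{Z}_{+}$. For every $n\in\mathbf{Z}_{+}$ (nonnegative integers), \[ H_{n}(x\vert\lambda)=\frac{1}{(1-\lambda)^{r}}\sum_{k=0}^{n}\binom{n}{k}\Bigl(\sum_{j=0}^{r}\binom{r}{j}(-\lambda)^{r-j}H_{n-k}(j\vert\lambda)\Bigr)H_{k}^{(r)}(x\vert\lambda). \]
   Context: For $\lambda\in\mathbf{C}$, $\lambda\neq1$, the Frobenius–Euler polynomials are defined by $\frac{1-\lambda}{e^{t}-\lambda}e^{xt}=\sum_{n=0}^{\infty}H_{n}(x\vert\lambda)\frac{t^{n}}{n!}$, and for $r\in\mathbf{Z}_{+}$ the Frobenius–Euler polynomials of order $r$ are defined by $\left(\frac{1-\lambda}{e^{t}-\lambda}\right)^{r}e^{xt}=\sum_{n=0}^{\infty}H_{n}^{(r)}(x\vert\lambda)\frac{t^{n}}{n!}$. $H_{n-k}(j\vert\lambda)$ is $H_{n-k}(x\vert\lambda)$ evaluated at $x=j$. *)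

theory Defs
  imports Complex_Main "HOL-Computational_Algebra.Formal_Power_Series"
begin

text \<open>Frobenius-Euler polynomials of order r, via the generating function
  ((1 - lambda)/(e^t - lambda))^r e^(x t) = sum_n H_n^(r)(x|lambda) t^n/n!,
  read as an identity of formal power series in t over the complex numbers.\<close>

definition FE_gen :: "nat \<Rightarrow> complex \<Rightarrow> complex \<Rightarrow> complex fps" where
  "FE_gen r lam x = (fps_const (1 - lam) / (fps_exp 1 - fps_const lam)) ^ r * fps_exp x"

definition FEH_ord :: "nat \<Rightarrow> nat \<Rightarrow> complex \<Rightarrow> complex \<Rightarrow> complex" where
  "FEH_ord r n x lam = fact n * fps_nth (FE_gen r lam x) n"

definition FEH :: "nat \<Rightarrow> complex \<Rightarrow> complex \<Rightarrow> complex" where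
  "FEH n x lam = FEH_ord 1 n x lam"

end

theory Submission
  imports Defs
begin

text \<open>Write \<open>A(t) = (1 - \<lambda>)/(e\<^sup>t - \<lambda>)\<close>, so that \<open>H\<^sub>m(j|\<lambda>)\<close> is \<open>m!\<close> times the \<open>m\<close>-th
  coefficient of \<open>A(t) e\<^sup>j\<^sup>t\<close>. By the binomial theorem the inner sum over \<open>j\<close> is then \<open>m!\<close>
  times the \<open>m\<close>-th coefficient of \<open>A (e\<^sup>t - \<lambda>)\<^sup>r\<close>, and the outer sum is a binomial convolution
  of exponential generating functions: it equals \<open>n!\<close> times the \<open>n\<close>-th coefficient of
  \<open>A (e\<^sup>t - \<lambda>)\<^sup>r \<cdot> A\<^sup>r e\<^sup>x\<^sup>t = (1 - \<lambda>)\<^sup>r A e\<^sup>x\<^sup>t\<close>, i.e. \<open>(1 - \<lambda>)\<^sup>r H\<^sub>n(x|\<lambda>)\<close>.\<close>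

unbundle fps_syntax

definition FE_kernel :: "complex \<Rightarrow> complex fps" where
  "FE_kernel lam = fps_const (1 - lam) / (fps_exp 1 - fps_const lam)"

lemma FE_gen_eq_kernel: "FE_gen r lam x = FE_kernel lam ^ r * fps_exp x"
  by (simp add: FE_gen_def FE_kernel_def)

lemma FE_kernel_mult_denominator:
  assumes "lam \<noteq> 1"
  shows "FE_kernel lam * (fps_exp 1 - fps_const lam) = fps_const (1 - lam)"
proof -
  have "(fps_exp 1 - fps_const lam) $ 0 \<noteq> 0"
    using assms by simp
  then show ?thesis
    by (simp add: FE_kernel_def fps_divide_unit inverse_mult_eq_1)
qed

lemma FEH_of_nat: "FEH m (of_nat j) lam = fact m * (FE_kernel lam * fps_exp 1 ^ j) $ m"
  by (simp add: FEH_def FEH_ord_def FE_gen_eq_kernel fps_exp_power_mult)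

lemma fact_fps_mult_nth:
  fixes f g :: "'a::field_char_0 fps"
  shows "fact n * (f * g) $ n
    = (\<Sum>k=0..n. of_nat (n choose k) * (fact k * f $ k) * (fact (n - k) * g $ (n - k)))"
proof -
  have "fact n = of_nat (n choose k) * fact k * (fact (n - k) :: 'a)" if "k \<le> n" for k
    using that by (simp add: binomial_fact)
  then show ?thesis
    by (auto simp: fps_mult_nth sum_distrib_left mult_ac intro!: sum.cong)
qed

lemma fps_mult_power_diff_const_nth:
  fixes f g :: "'a::comm_ring_1 fps"
  shows "(f * (g - fps_const c) ^ r) $ m
    = (\<Sum>j=0..r. of_nat (r choose j) * (- c) ^ (r - j) * (f * g ^ j) $ m)"
proof -
  have "(g - fps_const c) ^ r = (g + fps_const (- c)) ^ r"
    by (metis fps_const_neg diff_conv_add_uminus)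
  also have "\<dots> = (\<Sum>j=0..r. fps_const (of_nat (r choose j) * (- c) ^ (r - j)) * g ^ j)"
    by (simp add: binomial_ring atLeast0AtMost mult_ac
        flip: fps_of_nat fps_const_mult)
  finally have "(g - fps_const c) ^ r = \<dots>" .
  then show ?thesis
    by (simp add: sum_distrib_left fps_sum_nth mult.left_commute[of f])
qed

theorem theorem6:
  fixes lam x :: complex and r n :: nat
  assumes "lam \<noteq> 1"
  shows "FEH n x lam = 1 / (1 - lam) ^ r *
    (\<Sum>k=0..n. of_nat (n choose k) *
       (\<Sum>j=0..r. of_nat (r choose j) * (- lam) ^ (r - j) * FEH (n - k) (of_nat j) lam)
       * FEH_ord r k x lam)"
proof -
  define A where "A = FE_kernel lam"
  define D where "D = fps_exp 1 - fps_const lam"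
  have inner: "(\<Sum>j=0..r. of_nat (r choose j) * (- lam) ^ (r - j) * FEH m (of_nat j) lam)
      = fact m * (A * D ^ r) $ m" for m
    by (simp add: A_def D_def FEH_of_nat fps_mult_power_diff_const_nth sum_distrib_left mult_ac)
  have "(\<Sum>k=0..n. of_nat (n choose k) *
       (\<Sum>j=0..r. of_nat (r choose j) * (- lam) ^ (r - j) * FEH (n - k) (of_nat j) lam)
       * FEH_ord r k x lam)
      = (\<Sum>k=0..n. of_nat (n choose k) * (fact k * (A ^ r * fps_exp x) $ k)
          * (fact (n - k) * (A * D ^ r) $ (n - k)))"
    unfolding inner by (simp add: FEH_ord_def FE_gen_eq_kernel A_def mult_ac)
  also have "\<dots> = fact n * (A ^ r * fps_exp x * (A * D ^ r)) $ n"
    by (rule fact_fps_mult_nth[symmetric])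
  also have "A ^ r * fps_exp x * (A * D ^ r) = (A * D) ^ r * (A * fps_exp x)"
    by (simp add: power_mult_distrib mult_ac)
  also have "A * D = fps_const (1 - lam)"
    unfolding A_def D_def by (rule FE_kernel_mult_denominator[OF assms])
  finally show ?thesis
    using assms by (simp add: FEH_def FEH_ord_def FE_gen_eq_kernel A_def)
qed

end
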